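(* Let $\mathcal B=(B_1,\dots,B_d)$ and $\mathcal B'=(B'_1,\dots,B'_{d+1})$ be splittings of $B_J\in\mathbb R^{n\times n}$ of orders $d$ and $d+1$. Suppose there are integers $0\le r\le d-1$, $0\le s\le d$ such that, writing $(C_1,\dots,C_d)=\mathcal S^r(\mathcal B)$ and $(C'_1,\dots,C'_{d+1})=\mathcal S^s(\mathcal B')$, we have (I) $C'_p=C_p$ for $p=1,\dots,d-1$; (II) $(C'_d,C'_{d+1})$ is a splitting of $C_d$; and moreover $C'_{d+1}C'_d=O$. Then $T(\mathcal B)$ and $T(\mathcal B')$ have the same nonzero eigenvalues.
   Context: For $B\in\mathbb R^{n\times n}$, a splitting of $B$ of order $d\ge1$ is an ordered $d$-tuple $\mathcal B=(B_1,\dots,B_d)$ of real $n\times n$ matrices with $B_p\neq O$ for all $p$, $\sum_{p=1}^d B_p=B$, and $B_p\circ B_q=O$ (Hadamard product) for $p\ne q$. The iteration matrix of $\mathcal B$ is the $dn\times dn$ matrix $T(\mathcal B)=(I_{dn}-\mathcal L)^{-1}\mathcal U$, where $\mathcal L,\mathcal U$ are $d\times d$ block matrices with $n\times n$ blocks, $\mathcal L_{ij}=B_j$ if $i>j$ and $O$ otherwise, $\mathcal U_{ij}=B_j$ if $i\le j$ and $O$ otherwise. The cyclic shift is $\mathcal S(B_1,\dots,B_d)=(B_d,B_1,\dots,B_{d-1})$ and $\mathcal S^r$ is its $r$-fold iterate. *)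

theory Defs
  imports "Jordan_Normal_Form.Gauss_Jordan_Elimination" "Jordan_Normal_Form.Char_Poly"
begin

definition is_splitting :: "nat \<Rightarrow> real mat \<Rightarrow> real mat list \<Rightarrow> bool" where
  "is_splitting n B Bs \<longleftrightarrow>
     length Bs \<ge> 1 \<and> B \<in> carrier_mat n n \<and>
     (\<forall>p < length Bs. Bs ! p \<in> carrier_mat n n \<and> Bs ! p \<noteq> 0\<^sub>m n n) \<and>
     B = mat n n (\<lambda>ij. \<Sum>p < length Bs. Bs ! p $$ ij) \<and>
     (\<forall>p < length Bs. \<forall>q < length Bs. p \<noteq> q \<longrightarrow>
        (\<forall>i < n. \<forall>j < n. Bs ! p $$ (i, j) * Bs ! q $$ (i, j) = 0))"

(* block matrix L: block (i,j) is B_j if i > j, else O  (0-based block indices) *)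
definition block_L :: "nat \<Rightarrow> real mat list \<Rightarrow> real mat" where
  "block_L n Bs = mat (length Bs * n) (length Bs * n)
     (\<lambda>(i, j). if i div n > j div n then Bs ! (j div n) $$ (i mod n, j mod n) else 0)"

(* block matrix U: block (i,j) is B_j if i \<le> j, else O *)
definition block_U :: "nat \<Rightarrow> real mat list \<Rightarrow> real mat" where
  "block_U n Bs = mat (length Bs * n) (length Bs * n)
     (\<lambda>(i, j). if i div n \<le> j div n then Bs ! (j div n) $$ (i mod n, j mod n) else 0)"

definition iter_mat :: "nat \<Rightarrow> real mat list \<Rightarrow> real mat" where
  "iter_mat n Bs = the (mat_inverse (1\<^sub>m (length Bs * n) - block_L n Bs)) * block_U n Bs"

definition cshift :: "'a list \<Rightarrow> 'a list" where
  "cshift xs = last xs # butlast xs"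

definition nonzero_eigenvalues :: "real mat \<Rightarrow> complex set" where
  "nonzero_eigenvalues A = {k. k \<noteq> 0 \<and> eigenvalue (map_mat complex_of_real A) k}"

end

theory Submission
  imports Defs
begin

text \<open>
  For \<open>k \<noteq> 0\<close>, an eigenvector of \<open>T = (I - L)\<^sup>-\<^sup>1 U\<close> solves \<open>U v = k (I - L) v\<close>. Cut \<open>v\<close> into
  blocks \<open>x\<^sub>i\<close> and put \<open>w = \<Sum>\<^sub>j B\<^sub>j x\<^sub>j\<close>; consecutive block rows of the system differ by
  \<open>(k - 1) B\<^sub>i x\<^sub>i\<close>, so \<open>k x\<^sub>i = P\<^sub>i w\<close> with the partial products
  \<open>P\<^sub>i = (I + \<mu> B\<^sub>i\<^sub>-\<^sub>1) \<cdots> (I + \<mu> B\<^sub>0)\<close>, \<open>\<mu> = (k - 1) / k\<close>. The system thus collapses to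
  \<open>P\<^sub>d w = k w\<close> when \<open>k \<noteq> 1\<close> and to \<open>B\<^sub>J w = w\<close> when \<open>k = 1\<close>: the nonzero spectrum of \<open>T(\<B>)\<close> only
  depends on \<open>B\<^sub>J\<close> and the nonzero spectra of the products \<open>P\<^sub>d(\<mu>)\<close>. A cyclic shift of the
  splitting turns \<open>X Q\<close> into \<open>Q X\<close>, which has the same nonzero eigenvalues, and
  \<open>C'\<^sub>d\<^sub>+\<^sub>1 C'\<^sub>d = O\<close> lets the factors \<open>(I + \<mu> C'\<^sub>d\<^sub>+\<^sub>1)(I + \<mu> C'\<^sub>d)\<close> merge into \<open>I + \<mu> C\<^sub>d\<close>.
\<close>

lemma smult_vec_eq_zero_iff:
  fixes u :: "'a :: idom vec"
  assumes "u \<in> carrier_vec n"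
  shows "k \<cdot>\<^sub>v u = 0\<^sub>v n \<longleftrightarrow> k = 0 \<or> u = 0\<^sub>v n"
  using assms by (auto simp: vec_eq_iff)

lemma mult_mat_vec_zero [simp]: "A \<in> carrier_mat m n \<Longrightarrow> A *\<^sub>v 0\<^sub>v n = 0\<^sub>v m"
  by (rule eq_vecI) auto

lemma eigenvalue_iff_carrier:
  assumes "A \<in> carrier_mat n n"
  shows "eigenvalue A k \<longleftrightarrow> (\<exists>v \<in> carrier_vec n. v \<noteq> 0\<^sub>v n \<and> A *\<^sub>v v = k \<cdot>\<^sub>v v)"
  using assms unfolding eigenvalue_def eigenvector_def by auto

lemma eigenvalue_mult_commute:
  fixes X Y :: "'a :: field mat"
  assumes X: "X \<in> carrier_mat n n" and Y: "Y \<in> carrier_mat n n" and "k \<noteq> 0"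
  shows "eigenvalue (X * Y) k \<longleftrightarrow> eigenvalue (Y * X) k"
proof -
  have swap: "eigenvalue (Q * P) k" if P: "P \<in> carrier_mat n n" and Q: "Q \<in> carrier_mat n n"
    and "eigenvalue (P * Q) k" for P Q :: "'a mat"
  proof -
    obtain v where v: "v \<in> carrier_vec n" "v \<noteq> 0\<^sub>v n" "(P * Q) *\<^sub>v v = k \<cdot>\<^sub>v v"
      using \<open>eigenvalue (P * Q) k\<close> P Q by (auto simp: eigenvalue_iff_carrier[of _ n])
    have Qv: "Q *\<^sub>v v \<in> carrier_vec n" using Q v by simp
    have PQv: "P *\<^sub>v (Q *\<^sub>v v) = k \<cdot>\<^sub>v v" using P Q v by simp
    have "Q *\<^sub>v v \<noteq> 0\<^sub>v n"
    proof
      assume "Q *\<^sub>v v = 0\<^sub>v n"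
      then have "k \<cdot>\<^sub>v v = 0\<^sub>v n" using PQv P by simp
      with v(1,2) \<open>k \<noteq> 0\<close> show False by (simp add: smult_vec_eq_zero_iff)
    qed
    moreover have "(Q * P) *\<^sub>v (Q *\<^sub>v v) = k \<cdot>\<^sub>v (Q *\<^sub>v v)"
      using P Q v PQv by (simp add: mult_mat_vec[OF Q v(1)])
    ultimately show ?thesis using P Q Qv by (auto simp: eigenvalue_iff_carrier[of _ n])
  qed
  show ?thesis using swap[OF X Y] swap[OF Y X] by blast
qed

lemma eigenvalue_inverse_mult_iff:
  fixes A Ai U :: "'a :: field mat"
  assumes A: "A \<in> carrier_mat m m" and Ai: "Ai \<in> carrier_mat m m" and U: "U \<in> carrier_mat m m"
    and left_inv: "Ai * A = 1\<^sub>m m" and right_inv: "A * Ai = 1\<^sub>m m"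
  shows "eigenvalue (Ai * U) k \<longleftrightarrow> (\<exists>v \<in> carrier_vec m. v \<noteq> 0\<^sub>v m \<and> U *\<^sub>v v = k \<cdot>\<^sub>v (A *\<^sub>v v))"
proof -
  have "(Ai * U) *\<^sub>v v = k \<cdot>\<^sub>v v \<longleftrightarrow> U *\<^sub>v v = k \<cdot>\<^sub>v (A *\<^sub>v v)" if v: "v \<in> carrier_vec m" for v
  proof
    assume "(Ai * U) *\<^sub>v v = k \<cdot>\<^sub>v v"
    then have "(A * Ai) *\<^sub>v (U *\<^sub>v v) = A *\<^sub>v (k \<cdot>\<^sub>v v)"
      using A Ai U v by (simp add: assoc_mult_mat_vec[of _ m m _ m])
    then show "U *\<^sub>v v = k \<cdot>\<^sub>v (A *\<^sub>v v)"
      using A U v right_inv by (simp add: mult_mat_vec[OF A v])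
  next
    assume "U *\<^sub>v v = k \<cdot>\<^sub>v (A *\<^sub>v v)"
    then have "(Ai * U) *\<^sub>v v = k \<cdot>\<^sub>v ((Ai * A) *\<^sub>v v)"
      using A Ai U v by (simp add: mult_mat_vec[OF Ai])
    then show "(Ai * U) *\<^sub>v v = k \<cdot>\<^sub>v v" using v left_inv by simp
  qed
  then show ?thesis using Ai U by (auto simp: eigenvalue_iff_carrier[of _ m])
qed

primrec prod_one_plus_smult :: "nat \<Rightarrow> 'a \<Rightarrow> 'a :: comm_ring_1 mat list \<Rightarrow> 'a mat" where
  "prod_one_plus_smult n \<mu> [] = 1\<^sub>m n"
| "prod_one_plus_smult n \<mu> (C # Cs) = prod_one_plus_smult n \<mu> Cs * (1\<^sub>m n + \<mu> \<cdot>\<^sub>m C)"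

lemma prod_one_plus_smult_carrier [simp]:
  "set Cs \<subseteq> carrier_mat n n \<Longrightarrow> prod_one_plus_smult n \<mu> Cs \<in> carrier_mat n n"
  by (induction Cs) auto

lemma prod_one_plus_smult_take_carrier [simp]:
  "set Cs \<subseteq> carrier_mat n n \<Longrightarrow> prod_one_plus_smult n \<mu> (take i Cs) \<in> carrier_mat n n"
  by (meson prod_one_plus_smult_carrier order_trans set_take_subset)

lemma prod_one_plus_smult_snoc:
  assumes "set (Cs @ [C]) \<subseteq> carrier_mat n n"
  shows "prod_one_plus_smult n \<mu> (Cs @ [C]) = (1\<^sub>m n + \<mu> \<cdot>\<^sub>m C) * prod_one_plus_smult n \<mu> Cs"
  using assms
proof (induction Cs)
  case (Cons D Cs)
  then show ?case by (simp add: assoc_mult_mat[of _ n n _ n _ n])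
qed simp

lemma prod_one_plus_smult_zero: "set Cs \<subseteq> carrier_mat n n \<Longrightarrow> prod_one_plus_smult n 0 Cs = 1\<^sub>m n"
  by (induction Cs) auto

lemma one_plus_smult_mult_vec_index:
  fixes C :: "'a :: comm_ring_1 mat"
  assumes "C \<in> carrier_mat n n" and "u \<in> carrier_vec n" and "a < n"
  shows "((1\<^sub>m n + \<mu> \<cdot>\<^sub>m C) *\<^sub>v u) $ a = u $ a + \<mu> * (C *\<^sub>v u) $ a"
  using assms by (simp add: add_mult_distrib_mat_vec[of _ n n] scalar_prod_def sum_distrib_left mult.assoc)

lemma prod_one_plus_smult_take_Suc_mult_vec:
  fixes Cs :: "'a :: comm_ring_1 mat list"
  assumes Cs: "set Cs \<subseteq> carrier_mat n n" and i: "i < length Cs" and w: "w \<in> carrier_vec n" and "a < n"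
  shows "(prod_one_plus_smult n \<mu> (take (Suc i) Cs) *\<^sub>v w) $ a
    = (prod_one_plus_smult n \<mu> (take i Cs) *\<^sub>v w) $ a
      + \<mu> * (Cs ! i *\<^sub>v (prod_one_plus_smult n \<mu> (take i Cs) *\<^sub>v w)) $ a"
proof -
  let ?P = "prod_one_plus_smult n \<mu> (take i Cs)"
  have take: "take (Suc i) Cs = take i Cs @ [Cs ! i]" using i by (simp add: take_Suc_conv_app_nth)
  have carr: "set (take i Cs @ [Cs ! i]) \<subseteq> carrier_mat n n" using Cs i
    by (auto dest: in_set_takeD)
  then have P: "?P \<in> carrier_mat n n" and Ci: "Cs ! i \<in> carrier_mat n n" by auto
  have "prod_one_plus_smult n \<mu> (take (Suc i) Cs) *\<^sub>v w = (1\<^sub>m n + \<mu> \<cdot>\<^sub>m Cs ! i) *\<^sub>v (?P *\<^sub>v w)"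
    unfolding take prod_one_plus_smult_snoc[OF carr] using P Ci w by (simp add: assoc_mult_mat_vec[of _ n n _ n])
  then show ?thesis using one_plus_smult_mult_vec_index[OF Ci _ \<open>a < n\<close>] P w by simp
qed

lemma prod_one_plus_smult_take_mult_vec_telescope:
  fixes Cs :: "'a :: comm_ring_1 mat list"
  assumes "set Cs \<subseteq> carrier_mat n n" and "w \<in> carrier_vec n" and "a < n" and "i \<le> length Cs"
  shows "(prod_one_plus_smult n \<mu> (take i Cs) *\<^sub>v w) $ a
    = w $ a + \<mu> * (\<Sum>j<i. (Cs ! j *\<^sub>v (prod_one_plus_smult n \<mu> (take j Cs) *\<^sub>v w)) $ a)"
  using assms(4)
proof (induction i)
  case 0
  then show ?case using assms(2,3) by simp
next
  case (Suc i)
  then show ?case using prod_one_plus_smult_take_Suc_mult_vec[OF assms(1) _ assms(2,3)]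
    by (simp add: distrib_left)
qed

lemma one_plus_smult_mult_annihilating:
  fixes A B :: "'a :: comm_ring_1 mat"
  assumes A: "A \<in> carrier_mat n n" and B: "B \<in> carrier_mat n n" and "B * A = 0\<^sub>m n n"
  shows "(1\<^sub>m n + \<mu> \<cdot>\<^sub>m B) * (1\<^sub>m n + \<mu> \<cdot>\<^sub>m A) = 1\<^sub>m n + \<mu> \<cdot>\<^sub>m (A + B)"
proof -
  have A': "\<mu> \<cdot>\<^sub>m A \<in> carrier_mat n n" and B': "\<mu> \<cdot>\<^sub>m B \<in> carrier_mat n n"
    using A B by simp_all
  have "(1\<^sub>m n + \<mu> \<cdot>\<^sub>m B) * (1\<^sub>m n + \<mu> \<cdot>\<^sub>m A)
      = 1\<^sub>m n * (1\<^sub>m n + \<mu> \<cdot>\<^sub>m A) + (\<mu> \<cdot>\<^sub>m B) * (1\<^sub>m n + \<mu> \<cdot>\<^sub>m A)"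
    using A' B' by (intro add_mult_distrib_mat[of _ n n _ _ n]) auto
  also have "\<dots> = (1\<^sub>m n + \<mu> \<cdot>\<^sub>m A) + ((\<mu> \<cdot>\<^sub>m B) + (\<mu> \<cdot>\<^sub>m B) * (\<mu> \<cdot>\<^sub>m A))"
    using A' B'
    by (simp add: mult_add_distrib_mat[OF B' one_carrier_mat A'] left_mult_one_mat[of _ n n]
        right_mult_one_mat[OF B'])
  also have "(\<mu> \<cdot>\<^sub>m B) * (\<mu> \<cdot>\<^sub>m A) = 0\<^sub>m n n"
    using A B \<open>B * A = 0\<^sub>m n n\<close>
    by (simp add: mult_smult_assoc_mat[of _ n n _ n] mult_smult_distrib[of _ n n _ n])
  finally show ?thesis
    using A B A' B' by (simp add: add_smult_distrib_left_mat assoc_add_mat[of _ n n])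
qed

lemma prod_one_plus_smult_merge:
  fixes A B :: "'a :: comm_ring_1 mat"
  assumes "set (Cs @ [A, B]) \<subseteq> carrier_mat n n" and "B * A = 0\<^sub>m n n"
  shows "prod_one_plus_smult n \<mu> (Cs @ [A, B]) = prod_one_plus_smult n \<mu> (Cs @ [A + B])"
proof -
  have A: "A \<in> carrier_mat n n" and B: "B \<in> carrier_mat n n" and Cs: "set Cs \<subseteq> carrier_mat n n"
    using assms(1) by auto
  have "prod_one_plus_smult n \<mu> (Cs @ [A, B])
      = (1\<^sub>m n + \<mu> \<cdot>\<^sub>m B) * ((1\<^sub>m n + \<mu> \<cdot>\<^sub>m A) * prod_one_plus_smult n \<mu> Cs)"
    using prod_one_plus_smult_snoc[of "Cs @ [A]" B] prod_one_plus_smult_snoc[of Cs A] A B Cs by simp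
  also have "\<dots> = ((1\<^sub>m n + \<mu> \<cdot>\<^sub>m B) * (1\<^sub>m n + \<mu> \<cdot>\<^sub>m A)) * prod_one_plus_smult n \<mu> Cs"
    using A B Cs by (simp add: assoc_mult_mat[of _ n n _ n _ n])
  also have "\<dots> = prod_one_plus_smult n \<mu> (Cs @ [A + B])"
    using one_plus_smult_mult_annihilating[OF A B assms(2)] prod_one_plus_smult_snoc[of Cs "A + B"] A B Cs
    by simp
  finally show ?thesis .
qed

lemma prod_one_plus_smult_split_last:
  fixes Rs Ss :: "'a :: comm_ring_1 mat list"
  assumes lengths: "length Rs = d" "length Ss = d + 1" "1 \<le> d" and Ss: "set Ss \<subseteq> carrier_mat n n"
    and same: "\<forall>p < d - 1. Ss ! p = Rs ! p"
    and split: "Rs ! (d - 1) = Ss ! (d - 1) + Ss ! d" and annihilate: "Ss ! d * Ss ! (d - 1) = 0\<^sub>m n n"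
  shows "prod_one_plus_smult n \<mu> Ss = prod_one_plus_smult n \<mu> Rs"
proof -
  define ys where "ys = take (d - 1) Rs"
  have "take (d - 1) Ss = ys"
    unfolding ys_def using lengths same by (intro nth_equalityI) auto
  have "Ss = take d Ss @ [Ss ! d]"
    using lengths take_Suc_conv_app_nth[of d Ss] by simp
  also have "take d Ss = take (d - 1) Ss @ [Ss ! (d - 1)]"
    using lengths take_Suc_conv_app_nth[of "d - 1" Ss] by simp
  finally have "Ss = ys @ [Ss ! (d - 1), Ss ! d]" using \<open>take (d - 1) Ss = ys\<close> by simp
  moreover have "Rs = ys @ [Ss ! (d - 1) + Ss ! d]"
  proof -
    have "Rs = ys @ [Rs ! (d - 1)]"
      using lengths take_Suc_conv_app_nth[of "d - 1" Rs] by (simp add: ys_def)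
    then show ?thesis using split by simp
  qed
  ultimately show ?thesis
    using prod_one_plus_smult_merge[of ys "Ss ! (d - 1)" "Ss ! d" n] Ss annihilate by simp
qed

text \<open>\<open>cshift []\<close> is the junk list \<open>[last []]\<close>, hence the hypotheses \<open>xs \<noteq> []\<close>.\<close>

lemma cshift_length [simp]: "xs \<noteq> [] \<Longrightarrow> length (cshift xs) = length xs"
  by (simp add: cshift_def)

lemma cshift_set [simp]: "xs \<noteq> [] \<Longrightarrow> set (cshift xs) = set xs"
  by (cases xs rule: rev_cases) (auto simp: cshift_def)

lemma cshift_map: "xs \<noteq> [] \<Longrightarrow> cshift (map f xs) = map f (cshift xs)"
  by (simp add: cshift_def last_map map_butlast)

lemma cshift_pow_length_set [simp]:
  "xs \<noteq> [] \<Longrightarrow> length ((cshift ^^ r) xs) = length xs \<and> set ((cshift ^^ r) xs) = set xs"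
  by (induction r) (auto simp flip: length_greater_0_conv)

lemma cshift_pow_map: "xs \<noteq> [] \<Longrightarrow> (cshift ^^ r) (map f xs) = map f ((cshift ^^ r) xs)"
proof (induction r)
  case (Suc r)
  then have "(cshift ^^ r) xs \<noteq> []" by (metis cshift_pow_length_set length_0_conv)
  with Suc show ?case by (simp add: cshift_map)
qed simp

lemma eigenvalue_prod_cshift_iff:
  fixes Cs :: "'a :: field mat list"
  assumes "set Cs \<subseteq> carrier_mat n n" and "Cs \<noteq> []" and "k \<noteq> 0"
  shows "eigenvalue (prod_one_plus_smult n \<mu> (cshift Cs)) k \<longleftrightarrow> eigenvalue (prod_one_plus_smult n \<mu> Cs) k"
proof -
  let ?X = "1\<^sub>m n + \<mu> \<cdot>\<^sub>m last Cs" and ?P = "prod_one_plus_smult n \<mu> (butlast Cs)"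
  have Cs: "Cs = butlast Cs @ [last Cs]" using \<open>Cs \<noteq> []\<close> by simp
  have carr: "set (butlast Cs @ [last Cs]) \<subseteq> carrier_mat n n" using assms(1) Cs by simp
  then have X: "?X \<in> carrier_mat n n" and P: "?P \<in> carrier_mat n n" by auto
  have "prod_one_plus_smult n \<mu> Cs = ?X * ?P"
    by (subst Cs) (rule prod_one_plus_smult_snoc[OF carr])
  moreover have "prod_one_plus_smult n \<mu> (cshift Cs) = ?P * ?X"
    by (simp add: cshift_def)
  ultimately show ?thesis using eigenvalue_mult_commute[OF X P \<open>k \<noteq> 0\<close>] by simp
qed

lemma eigenvalue_prod_cshift_pow_iff:
  fixes Cs :: "'a :: field mat list"
  assumes "set Cs \<subseteq> carrier_mat n n" and "Cs \<noteq> []" and "k \<noteq> 0"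
  shows "eigenvalue (prod_one_plus_smult n \<mu> ((cshift ^^ r) Cs)) k \<longleftrightarrow> eigenvalue (prod_one_plus_smult n \<mu> Cs) k"
proof (induction r)
  case (Suc r)
  have "set ((cshift ^^ r) Cs) \<subseteq> carrier_mat n n" "(cshift ^^ r) Cs \<noteq> []"
    using assms cshift_pow_length_set[of Cs r] by (auto simp flip: length_greater_0_conv)
  with Suc show ?case using eigenvalue_prod_cshift_iff[OF _ _ \<open>k \<noteq> 0\<close>] by simp
qed simp

lemma sum_lessThan_mult_blocks:
  fixes d n :: nat and g :: "nat \<Rightarrow> 'a :: comm_monoid_add"
  shows "(\<Sum>k<d * n. g k) = (\<Sum>j<d. \<Sum>b<n. g (j * n + b))"
proof -
  have "(\<Sum>k\<in>{j * n..<j * n + n}. g k) = (\<Sum>b<n. g (j * n + b))" for j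
    using sum.shift_bounds_nat_ivl[of g 0 "j * n" n] by (simp add: atLeast0LessThan add.commute)
  then show ?thesis using sum.nat_group[where g = g and k = n and n = d] by simp
qed

lemma block_index_bound:
  fixes j b d n :: nat
  assumes "j < d" and "b < n"
  shows "j * n + b < d * n"
proof -
  have "j * n + b < Suc j * n" using \<open>b < n\<close> by simp
  also have "\<dots> \<le> d * n" using \<open>j < d\<close> by (intro mult_le_mono1) simp
  finally show ?thesis .
qed

lemma block_index_div_mod: "k < d * (n::nat) \<Longrightarrow> k div n < d \<and> k mod n < n"
  by (metis less_mult_imp_div_less mod_less_divisor mult_zero_right not_less_zero zero_less_iff_neq_zero)

lemma all_block_index_iff: "(\<forall>k < d * n. P k) \<longleftrightarrow> (\<forall>i < d. \<forall>a < (n::nat). P (i * n + a))"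
  by (metis block_index_bound block_index_div_mod div_mult_mod_eq)

definition block_mat :: "(nat \<Rightarrow> nat \<Rightarrow> bool) \<Rightarrow> nat \<Rightarrow> 'a :: zero mat list \<Rightarrow> 'a mat" where
  "block_mat P n Cs = mat (length Cs * n) (length Cs * n)
     (\<lambda>(i, j). if P (i div n) (j div n) then Cs ! (j div n) $$ (i mod n, j mod n) else 0)"

lemma block_mat_carrier [simp]: "block_mat P n Cs \<in> carrier_mat (length Cs * n) (length Cs * n)"
  by (simp add: block_mat_def)

lemma block_mat_dim [simp]:
  "dim_row (block_mat P n Cs) = length Cs * n" "dim_col (block_mat P n Cs) = length Cs * n"
  by (simp_all add: block_mat_def)

lemma block_L_eq_block_mat: "block_L n Bs = block_mat (\<lambda>i j. j < i) n Bs"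
  by (simp add: block_L_def block_mat_def)

lemma block_U_eq_block_mat: "block_U n Bs = block_mat (\<le>) n Bs"
  by (simp add: block_U_def block_mat_def)

lemma map_mat_block_mat:
  assumes "set Cs \<subseteq> carrier_mat n n" and "f 0 = 0"
  shows "map_mat f (block_mat P n Cs) = block_mat P n (map (map_mat f) Cs)"
proof (rule eq_matI)
  fix i j
  assume "i < dim_row (block_mat P n (map (map_mat f) Cs))" "j < dim_col (block_mat P n (map (map_mat f) Cs))"
  then have "i < length Cs * n" "j < length Cs * n" by simp_all
  then have "j div n < length Cs" "i mod n < n" "j mod n < n"
    using block_index_div_mod by blast+
  moreover have "Cs ! (j div n) \<in> carrier_mat n n" using assms(1) \<open>j div n < length Cs\<close> by auto
  ultimately show "map_mat f (block_mat P n Cs) $$ (i, j) = block_mat P n (map (map_mat f) Cs) $$ (i, j)"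
    using assms(2) \<open>i < length Cs * n\<close> \<open>j < length Cs * n\<close> by (simp add: block_mat_def)
qed (simp_all add: block_mat_def)

definition block_vec :: "nat \<Rightarrow> 'a vec \<Rightarrow> nat \<Rightarrow> 'a vec" where
  "block_vec n v j = vec n (\<lambda>b. v $ (j * n + b))"

lemma block_vec_carrier [simp]: "block_vec n v j \<in> carrier_vec n"
  by (simp add: block_vec_def)

lemma block_vec_zero: "i < d \<Longrightarrow> block_vec n (0\<^sub>v (d * n)) i = 0\<^sub>v n"
  by (simp add: block_vec_def vec_eq_iff block_index_bound)

lemma block_mat_mult_vec:
  fixes Cs :: "'a :: comm_semiring_0 mat list"
  assumes Cs: "set Cs \<subseteq> carrier_mat n n" and v: "v \<in> carrier_vec (length Cs * n)"
    and "i < length Cs" and "a < n"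
  shows "(block_mat P n Cs *\<^sub>v v) $ (i * n + a)
    = (\<Sum>j<length Cs. if P i j then (Cs ! j *\<^sub>v block_vec n v j) $ a else 0)"
proof -
  let ?d = "length Cs" and ?M = "block_mat P n Cs"
  have "(?M *\<^sub>v v) $ (i * n + a) = (\<Sum>k<?d * n. ?M $$ (i * n + a, k) * v $ k)"
    using v block_index_bound[OF assms(3,4)]
    by (simp add: block_mat_def scalar_prod_def atLeast0LessThan)
  also have "\<dots> = (\<Sum>j<?d. \<Sum>b<n. ?M $$ (i * n + a, j * n + b) * v $ (j * n + b))"
    by (rule sum_lessThan_mult_blocks)
  also have "\<dots> = (\<Sum>j<?d. if P i j then (Cs ! j *\<^sub>v block_vec n v j) $ a else 0)"
  proof (rule sum.cong [OF refl])
    fix j assume "j \<in> {..<?d}"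
    then have j: "j < ?d" and Cj: "Cs ! j \<in> carrier_mat n n" using Cs by auto
    have "?M $$ (i * n + a, j * n + b) = (if P i j then Cs ! j $$ (a, b) else 0)" if "b < n" for b
      using that assms(3,4) block_index_bound[OF assms(3,4)] block_index_bound[OF j that]
      by (simp add: block_mat_def)
    moreover have "(Cs ! j *\<^sub>v block_vec n v j) $ a = (\<Sum>b<n. Cs ! j $$ (a, b) * v $ (j * n + b))"
      using Cj assms(4) by (simp add: block_vec_def scalar_prod_def atLeast0LessThan)
    ultimately show "(\<Sum>b<n. ?M $$ (i * n + a, j * n + b) * v $ (j * n + b))
        = (if P i j then (Cs ! j *\<^sub>v block_vec n v j) $ a else 0)"
      by simp
  qed
  finally show ?thesis .
qed

lemma ex_nonzero_block_vec_iff: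
  assumes Q_cong: "\<And>x y. (\<And>i. i < d \<Longrightarrow> x i = y i) \<Longrightarrow> Q x \<longleftrightarrow> Q y"
  shows "(\<exists>v \<in> carrier_vec (d * n). v \<noteq> 0\<^sub>v (d * n) \<and> Q (block_vec n v))
    \<longleftrightarrow> (\<exists>x. (\<forall>i < d. x i \<in> carrier_vec n) \<and> (\<exists>i < d. x i \<noteq> 0\<^sub>v n) \<and> Q x)"
proof
  assume "\<exists>v \<in> carrier_vec (d * n). v \<noteq> 0\<^sub>v (d * n) \<and> Q (block_vec n v)"
  then obtain v where v: "v \<in> carrier_vec (d * n)" "v \<noteq> 0\<^sub>v (d * n)" "Q (block_vec n v)" by blast
  have "\<exists>i < d. block_vec n v i \<noteq> 0\<^sub>v n"
  proof (rule ccontr)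
    assume "\<not> (\<exists>i < d. block_vec n v i \<noteq> 0\<^sub>v n)"
    then have "\<forall>i < d. \<forall>a < n. v $ (i * n + a) = 0"
      by (metis block_vec_def index_vec index_zero_vec(1))
    then have "v = 0\<^sub>v (d * n)"
      using v(1) by (simp add: vec_eq_iff all_block_index_iff block_index_bound)
    with v(2) show False ..
  qed
  with v(3) show "\<exists>x. (\<forall>i < d. x i \<in> carrier_vec n) \<and> (\<exists>i < d. x i \<noteq> 0\<^sub>v n) \<and> Q x"
    by (intro exI[of _ "block_vec n v"]) auto
next
  assume "\<exists>x. (\<forall>i < d. x i \<in> carrier_vec n) \<and> (\<exists>i < d. x i \<noteq> 0\<^sub>v n) \<and> Q x"
  then obtain x i where x: "\<forall>i < d. x i \<in> carrier_vec n" and i: "i < d" "x i \<noteq> 0\<^sub>v n" and "Q x"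
    by blast
  define v where "v = vec (d * n) (\<lambda>p. x (p div n) $ (p mod n))"
  have blocks: "block_vec n v j = x j" if "j < d" for j
  proof -
    have "v $ (j * n + b) = x j $ b" if "b < n" for b
      using that block_index_bound[OF \<open>j < d\<close> that] by (simp add: v_def)
    moreover have "x j \<in> carrier_vec n" using x \<open>j < d\<close> by simp
    ultimately show ?thesis by (auto simp: vec_eq_iff block_vec_def)
  qed
  then have "Q (block_vec n v)" using Q_cong \<open>Q x\<close> by blast
  moreover have "v \<noteq> 0\<^sub>v (d * n)"
    using blocks block_vec_zero i by metis
  ultimately show "\<exists>v \<in> carrier_vec (d * n). v \<noteq> 0\<^sub>v (d * n) \<and> Q (block_vec n v)"
    by (auto simp: v_def)
qed

text \<open>Block row \<open>i\<close> of \<open>(U + k L) v\<close> is \<open>block_comb n Cs (\<lambda>j. if j < i then k else 1) x\<close>,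
  where \<open>x\<close> are the blocks of \<open>v\<close>.\<close>

definition block_comb :: "nat \<Rightarrow> 'a :: comm_semiring_0 mat list \<Rightarrow> (nat \<Rightarrow> 'a) \<Rightarrow> (nat \<Rightarrow> 'a vec) \<Rightarrow> 'a vec" where
  "block_comb n Cs c x = vec n (\<lambda>a. \<Sum>j<length Cs. c j * (Cs ! j *\<^sub>v x j) $ a)"

lemma block_comb_carrier [simp]: "block_comb n Cs c x \<in> carrier_vec n"
  and block_comb_dim [simp]: "dim_vec (block_comb n Cs c x) = n"
  by (simp_all add: block_comb_def)

lemma block_comb_cong:
  "(\<And>j. j < length Cs \<Longrightarrow> c j = c' j) \<Longrightarrow> (\<And>j. j < length Cs \<Longrightarrow> x j = y j)
    \<Longrightarrow> block_comb n Cs c x = block_comb n Cs c' y"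
  by (simp add: block_comb_def)

lemma block_comb_smult:
  fixes Cs :: "'a :: field mat list"
  assumes "set Cs \<subseteq> carrier_mat n n" and "\<And>j. j < length Cs \<Longrightarrow> x j \<in> carrier_vec n"
  shows "block_comb n Cs c (\<lambda>j. k \<cdot>\<^sub>v x j) = k \<cdot>\<^sub>v block_comb n Cs c x"
proof (rule eq_vecI)
  fix a assume "a < dim_vec (k \<cdot>\<^sub>v block_comb n Cs c x)"
  then have "a < n" by simp
  have "(Cs ! j *\<^sub>v (k \<cdot>\<^sub>v x j)) $ a = k * (Cs ! j *\<^sub>v x j) $ a" if "j < length Cs" for j
  proof -
    have "Cs ! j \<in> carrier_mat n n" "x j \<in> carrier_vec n" using assms that by auto
    then show ?thesis using \<open>a < n\<close> by (simp add: mult_mat_vec)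
  qed
  then show "block_comb n Cs c (\<lambda>j. k \<cdot>\<^sub>v x j) $ a = (k \<cdot>\<^sub>v block_comb n Cs c x) $ a"
    using \<open>a < n\<close> by (simp add: block_comb_def sum_distrib_left algebra_simps)
qed simp

lemma block_comb_weight_Suc_index:
  fixes Cs :: "'a :: comm_ring_1 mat list"
  assumes "i < length Cs" and "a < n"
  shows "block_comb n Cs (\<lambda>j. if j < Suc i then k else 1) x $ a
    = block_comb n Cs (\<lambda>j. if j < i then k else 1) x $ a + (k - 1) * (Cs ! i *\<^sub>v x i) $ a"
proof -
  have "(\<Sum>j<length Cs. (if j < Suc i then k else 1) * (Cs ! j *\<^sub>v x j) $ a)
      = (\<Sum>j<length Cs. (if j < i then k else 1) * (Cs ! j *\<^sub>v x j) $ a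
          + (if j = i then (k - 1) * (Cs ! j *\<^sub>v x j) $ a else 0))"
    by (rule sum.cong) (auto simp: algebra_simps)
  with assms show ?thesis by (simp add: block_comb_def sum.distrib)
qed

lemma block_comb_const:
  fixes Cs :: "'a :: comm_semiring_1 mat list"
  assumes "set Cs \<subseteq> carrier_mat n n" and "w \<in> carrier_vec n"
  shows "block_comb n Cs (\<lambda>_. 1) (\<lambda>_. w) = mat n n (\<lambda>ij. \<Sum>j<length Cs. Cs ! j $$ ij) *\<^sub>v w"
proof (rule eq_vecI)
  fix a assume "a < dim_vec (mat n n (\<lambda>ij. \<Sum>j<length Cs. Cs ! j $$ ij) *\<^sub>v w)"
  then have "a < n" by simp
  have "(\<Sum>j<length Cs. (Cs ! j *\<^sub>v w) $ a) = (\<Sum>j<length Cs. \<Sum>b<n. Cs ! j $$ (a, b) * w $ b)"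
  proof (rule sum.cong [OF refl])
    fix j assume "j \<in> {..<length Cs}"
    then have "Cs ! j \<in> carrier_mat n n" using assms(1) by auto
    then show "(Cs ! j *\<^sub>v w) $ a = (\<Sum>b<n. Cs ! j $$ (a, b) * w $ b)"
      using assms(2) \<open>a < n\<close> by (simp add: scalar_prod_def atLeast0LessThan)
  qed
  also have "\<dots> = (\<Sum>b<n. (\<Sum>j<length Cs. Cs ! j $$ (a, b)) * w $ b)"
    by (simp add: sum.swap[of _ "{..<length Cs}"] sum_distrib_right)
  finally show "block_comb n Cs (\<lambda>_. 1) (\<lambda>_. w) $ a = (mat n n (\<lambda>ij. \<Sum>j<length Cs. Cs ! j $$ ij) *\<^sub>v w) $ a"
    using assms(2) \<open>a < n\<close> by (simp add: block_comb_def scalar_prod_def atLeast0LessThan)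
qed simp

lemma generalized_eigen_iff_block_system:
  fixes Cs :: "'a :: comm_ring_1 mat list"
  assumes Cs: "set Cs \<subseteq> carrier_mat n n" and v: "v \<in> carrier_vec (length Cs * n)"
  shows "block_mat (\<le>) n Cs *\<^sub>v v = k \<cdot>\<^sub>v ((1\<^sub>m (length Cs * n) - block_mat (\<lambda>i j. j < i) n Cs) *\<^sub>v v)
    \<longleftrightarrow> (\<forall>i < length Cs. k \<cdot>\<^sub>v block_vec n v i = block_comb n Cs (\<lambda>j. if j < i then k else 1) (block_vec n v))"
proof -
  let ?m = "length Cs * n" and ?U = "block_mat (\<le>) n Cs" and ?L = "block_mat (\<lambda>i j. j < i) n Cs"
  have row: "(?U *\<^sub>v v) $ (i * n + a) + k * (?L *\<^sub>v v) $ (i * n + a)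
      = block_comb n Cs (\<lambda>j. if j < i then k else 1) (block_vec n v) $ a"
    if "i < length Cs" "a < n" for i a
  proof -
    have "(if i \<le> j then y else 0) + k * (if j < i then y else 0) = (if j < i then k else 1) * y"
      for j and y :: 'a
      by simp
    then show ?thesis
      using that unfolding block_mat_mult_vec[OF Cs v that] block_comb_def
      by (simp add: sum_distrib_left flip: sum.distrib)
  qed
  have "(1\<^sub>m ?m - ?L) *\<^sub>v v = v - ?L *\<^sub>v v"
    using v by (simp add: minus_mult_distrib_mat_vec[of _ ?m ?m])
  then have "?U *\<^sub>v v = k \<cdot>\<^sub>v ((1\<^sub>m ?m - ?L) *\<^sub>v v)
      \<longleftrightarrow> (\<forall>p < ?m. (?U *\<^sub>v v) $ p = k * (v $ p - (?L *\<^sub>v v) $ p))"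
    using v by (simp add: vec_eq_iff)
  also have "\<dots> \<longleftrightarrow> (\<forall>p < ?m. (?U *\<^sub>v v) $ p + k * (?L *\<^sub>v v) $ p = k * v $ p)"
    by (simp add: right_diff_distrib eq_diff_eq)
  also have "\<dots> \<longleftrightarrow> (\<forall>i < length Cs. \<forall>a < n.
      block_comb n Cs (\<lambda>j. if j < i then k else 1) (block_vec n v) $ a = k * v $ (i * n + a))"
    by (simp add: all_block_index_iff row del: index_mult_mat_vec)
  also have "\<dots> \<longleftrightarrow> (\<forall>i < length Cs. k \<cdot>\<^sub>v block_vec n v i = block_comb n Cs (\<lambda>j. if j < i then k else 1) (block_vec n v))"
    by (auto simp: vec_eq_iff block_vec_def)
  finally show ?thesis .
qed

lemma block_system_imp_partial_products:
  fixes Cs :: "'a :: field mat list"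
  assumes Cs: "set Cs \<subseteq> carrier_mat n n" and "k \<noteq> 0"
    and x: "\<And>i. i < length Cs \<Longrightarrow> x i \<in> carrier_vec n"
    and sys: "\<And>i. i < length Cs \<Longrightarrow> k \<cdot>\<^sub>v x i = block_comb n Cs (\<lambda>j. if j < i then k else 1) x"
    and "i \<le> length Cs"
  shows "prod_one_plus_smult n ((k - 1) / k) (take i Cs) *\<^sub>v block_comb n Cs (\<lambda>_. 1) x
    = block_comb n Cs (\<lambda>j. if j < i then k else 1) x"
  using \<open>i \<le> length Cs\<close>
proof (induction i)
  case 0
  then show ?case by simp
next
  case (Suc i)
  let ?w = "block_comb n Cs (\<lambda>_. 1) x"
  have i: "i < length Cs" using Suc.prems by simp
  have Ci: "Cs ! i \<in> carrier_mat n n" and xi: "x i \<in> carrier_vec n" using Cs x i by auto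
  have "(prod_one_plus_smult n ((k - 1) / k) (take (Suc i) Cs) *\<^sub>v ?w) $ a
      = block_comb n Cs (\<lambda>j. if j < Suc i then k else 1) x $ a" if "a < n" for a
  proof -
    have "(prod_one_plus_smult n ((k - 1) / k) (take (Suc i) Cs) *\<^sub>v ?w) $ a
        = block_comb n Cs (\<lambda>j. if j < i then k else 1) x $ a
          + (k - 1) / k * (Cs ! i *\<^sub>v (k \<cdot>\<^sub>v x i)) $ a"
      using prod_one_plus_smult_take_Suc_mult_vec[OF Cs i _ that] Suc.IH i sys by simp
    also have "\<dots> = block_comb n Cs (\<lambda>j. if j < i then k else 1) x $ a + (k - 1) * (Cs ! i *\<^sub>v x i) $ a"
      using \<open>k \<noteq> 0\<close> that Ci by (simp add: mult_mat_vec[OF Ci xi])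
    finally show ?thesis using block_comb_weight_Suc_index[OF i that] by simp
  qed
  then show ?case using carrier_matD(1)[OF prod_one_plus_smult_take_carrier[OF Cs]] by (simp add: vec_eq_iff)
qed

lemma partial_products_imp_block_system:
  fixes Cs :: "'a :: field mat list"
  assumes Cs: "set Cs \<subseteq> carrier_mat n n" and "k \<noteq> 0" and w: "w \<in> carrier_vec n"
  defines "P \<equiv> \<lambda>i. prod_one_plus_smult n ((k - 1) / k) (take i Cs)"
  assumes eq: "block_comb n Cs (\<lambda>_. 1) (\<lambda>j. P j *\<^sub>v w) = k \<cdot>\<^sub>v w" and "i \<le> length Cs"
  shows "block_comb n Cs (\<lambda>j. if j < i then k else 1) (\<lambda>j. (1 / k) \<cdot>\<^sub>v (P j *\<^sub>v w)) = P i *\<^sub>v w"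
  using \<open>i \<le> length Cs\<close>
proof (induction i)
  case 0
  have "block_comb n Cs (\<lambda>_. 1) (\<lambda>j. (1 / k) \<cdot>\<^sub>v (P j *\<^sub>v w)) = (1 / k) \<cdot>\<^sub>v (k \<cdot>\<^sub>v w)"
    using block_comb_smult[OF Cs, of "\<lambda>j. P j *\<^sub>v w"] w eq
      mult_mat_vec_carrier[OF prod_one_plus_smult_take_carrier[OF Cs] w] by (simp add: P_def)
  then show ?case using w \<open>k \<noteq> 0\<close> by (simp add: P_def smult_smult_assoc)
next
  case (Suc i)
  let ?x = "\<lambda>j. (1 / k) \<cdot>\<^sub>v (P j *\<^sub>v w)"
  have i: "i < length Cs" using Suc.prems by simp
  have Ci: "Cs ! i \<in> carrier_mat n n" using Cs i by auto
  have Pw: "P i *\<^sub>v w \<in> carrier_vec n"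
    unfolding P_def by (rule mult_mat_vec_carrier[OF prod_one_plus_smult_take_carrier[OF Cs] w])
  have "block_comb n Cs (\<lambda>j. if j < Suc i then k else 1) ?x $ a = (P (Suc i) *\<^sub>v w) $ a" if "a < n" for a
  proof -
    have "block_comb n Cs (\<lambda>j. if j < Suc i then k else 1) ?x $ a
        = (P i *\<^sub>v w) $ a + (k - 1) * (Cs ! i *\<^sub>v ?x i) $ a"
      using block_comb_weight_Suc_index[OF i that] Suc.IH i by simp
    also have "\<dots> = (P (Suc i) *\<^sub>v w) $ a"
      using prod_one_plus_smult_take_Suc_mult_vec[OF Cs i w that] that Ci
      by (simp add: P_def mult_mat_vec[OF Ci Pw[unfolded P_def]])
    finally show ?thesis .
  qed
  then show ?case using carrier_matD(1)[OF prod_one_plus_smult_take_carrier[OF Cs]] by (simp add: vec_eq_iff P_def)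
qed

lemma block_system_iff_partial_products:
  fixes Cs :: "'a :: field mat list"
  assumes Cs: "set Cs \<subseteq> carrier_mat n n" and "Cs \<noteq> []" and "k \<noteq> 0"
  defines "P \<equiv> \<lambda>i. prod_one_plus_smult n ((k - 1) / k) (take i Cs)"
  shows "(\<exists>x. (\<forall>i < length Cs. x i \<in> carrier_vec n) \<and> (\<exists>i < length Cs. x i \<noteq> 0\<^sub>v n)
            \<and> (\<forall>i < length Cs. k \<cdot>\<^sub>v x i = block_comb n Cs (\<lambda>j. if j < i then k else 1) x))
    \<longleftrightarrow> (\<exists>w \<in> carrier_vec n. w \<noteq> 0\<^sub>v n \<and> block_comb n Cs (\<lambda>_. 1) (\<lambda>j. P j *\<^sub>v w) = k \<cdot>\<^sub>v w)"
proof safe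
  fix x i
  assume x: "\<forall>i < length Cs. x i \<in> carrier_vec n" and "i < length Cs" "x i \<noteq> 0\<^sub>v n"
    and sys: "\<forall>i < length Cs. k \<cdot>\<^sub>v x i = block_comb n Cs (\<lambda>j. if j < i then k else 1) x"
  let ?w = "block_comb n Cs (\<lambda>_. 1) x"
  have P_w: "P j *\<^sub>v ?w = k \<cdot>\<^sub>v x j" if "j < length Cs" for j
    using block_system_imp_partial_products[OF Cs \<open>k \<noteq> 0\<close>, of x j] x sys that by (simp add: P_def)
  have "block_comb n Cs (\<lambda>_. 1) (\<lambda>j. P j *\<^sub>v ?w) = k \<cdot>\<^sub>v ?w"
    using block_comb_cong[of Cs "\<lambda>_. 1" "\<lambda>_. 1" "\<lambda>j. P j *\<^sub>v ?w" "\<lambda>j. k \<cdot>\<^sub>v x j" n] P_w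
      block_comb_smult[OF Cs] x by simp
  moreover have "?w \<noteq> 0\<^sub>v n"
  proof
    assume "?w = 0\<^sub>v n"
    then have "k \<cdot>\<^sub>v x i = 0\<^sub>v n"
      using P_w[OF \<open>i < length Cs\<close>] mult_mat_vec_zero[OF prod_one_plus_smult_take_carrier[OF Cs]]
      by (simp add: P_def)
    with x \<open>i < length Cs\<close> \<open>x i \<noteq> 0\<^sub>v n\<close> \<open>k \<noteq> 0\<close> show False by (simp add: smult_vec_eq_zero_iff)
  qed
  ultimately show "\<exists>w \<in> carrier_vec n. w \<noteq> 0\<^sub>v n \<and> block_comb n Cs (\<lambda>_. 1) (\<lambda>j. P j *\<^sub>v w) = k \<cdot>\<^sub>v w"
    by auto
next
  fix w
  assume w: "w \<in> carrier_vec n" "w \<noteq> 0\<^sub>v n" and eq: "block_comb n Cs (\<lambda>_. 1) (\<lambda>j. P j *\<^sub>v w) = k \<cdot>\<^sub>v w"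
  let ?x = "\<lambda>j. (1 / k) \<cdot>\<^sub>v (P j *\<^sub>v w)"
  have "k \<cdot>\<^sub>v ?x i = block_comb n Cs (\<lambda>j. if j < i then k else 1) ?x" if "i < length Cs" for i
    using partial_products_imp_block_system[OF Cs \<open>k \<noteq> 0\<close> w(1) eq[unfolded P_def], of i] that
      \<open>k \<noteq> 0\<close> by (simp add: P_def smult_smult_assoc)
  moreover have "?x 0 \<noteq> 0\<^sub>v n"
    using w \<open>k \<noteq> 0\<close> by (simp add: P_def smult_vec_eq_zero_iff)
  ultimately show "\<exists>x. (\<forall>i < length Cs. x i \<in> carrier_vec n) \<and> (\<exists>i < length Cs. x i \<noteq> 0\<^sub>v n)
      \<and> (\<forall>i < length Cs. k \<cdot>\<^sub>v x i = block_comb n Cs (\<lambda>j. if j < i then k else 1) x)"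
    using mult_mat_vec_carrier[OF prod_one_plus_smult_take_carrier[OF Cs] w(1)] \<open>Cs \<noteq> []\<close>
    by (intro exI[of _ ?x]) (auto simp: P_def)
qed

lemma partial_products_eigen_iff:
  fixes Cs :: "'a :: field mat list"
  assumes Cs: "set Cs \<subseteq> carrier_mat n n" and w: "w \<in> carrier_vec n" and "k \<noteq> 0" and "k \<noteq> 1"
  defines "P \<equiv> \<lambda>i. prod_one_plus_smult n ((k - 1) / k) (take i Cs)"
  shows "block_comb n Cs (\<lambda>_. 1) (\<lambda>j. P j *\<^sub>v w) = k \<cdot>\<^sub>v w
    \<longleftrightarrow> prod_one_plus_smult n ((k - 1) / k) Cs *\<^sub>v w = k \<cdot>\<^sub>v w"
proof -
  define \<mu> where "\<mu> = (k - 1) / k"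
  let ?S = "block_comb n Cs (\<lambda>_. 1) (\<lambda>j. prod_one_plus_smult n \<mu> (take j Cs) *\<^sub>v w)"
  have "\<mu> \<noteq> 0" and \<mu>k: "\<mu> * k = k - 1" using assms(3,4) by (simp_all add: \<mu>_def)
  have telescope: "(prod_one_plus_smult n \<mu> Cs *\<^sub>v w) $ a = w $ a + \<mu> * ?S $ a" if "a < n" for a
    using prod_one_plus_smult_take_mult_vec_telescope[OF Cs w that, of "length Cs" \<mu>] that
    by (simp add: block_comb_def)
  have "?S $ a = k * w $ a \<longleftrightarrow> w $ a + \<mu> * ?S $ a = k * w $ a" for a
  proof -
    have "?S $ a = k * w $ a \<longleftrightarrow> \<mu> * ?S $ a = \<mu> * (k * w $ a)"
      using \<open>\<mu> \<noteq> 0\<close> by simp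
    also have "\<mu> * (k * w $ a) = k * w $ a - w $ a"
      using \<mu>k by (simp add: mult.assoc[symmetric] left_diff_distrib)
    finally show ?thesis by (simp add: eq_diff_eq add.commute)
  qed
  then have "?S = k \<cdot>\<^sub>v w \<longleftrightarrow> (\<forall>a < n. (prod_one_plus_smult n \<mu> Cs *\<^sub>v w) $ a = k * w $ a)"
    using w telescope by (auto simp: vec_eq_iff)
  also have "\<dots> \<longleftrightarrow> prod_one_plus_smult n \<mu> Cs *\<^sub>v w = k \<cdot>\<^sub>v w"
    using w prod_one_plus_smult_carrier[OF Cs, of \<mu>] by (auto simp: vec_eq_iff)
  finally show ?thesis by (simp add: P_def \<mu>_def)
qed

lemma iter_mat_inverse:
  fixes Bs :: "real mat list" and n :: nat
  defines "m \<equiv> length Bs * n"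
  obtains Ai where "Ai \<in> carrier_mat m m"
    and "Ai * (1\<^sub>m m - block_L n Bs) = 1\<^sub>m m" and "(1\<^sub>m m - block_L n Bs) * Ai = 1\<^sub>m m"
    and "iter_mat n Bs = Ai * block_U n Bs"
proof -
  let ?A = "1\<^sub>m m - block_L n Bs"
  have L: "block_L n Bs \<in> carrier_mat m m" by (simp add: block_L_def m_def)
  have A: "?A \<in> carrier_mat m m" using L by (rule minus_carrier_mat)
  have upper_zero: "?A $$ (i, j) = 0" if "i < j" "j < m" for i j
  proof -
    have "i div n \<le> j div n" using that by (simp add: div_le_mono)
    then show ?thesis using that L by (simp add: block_L_def m_def)
  qed
  have "diag_mat ?A = map (\<lambda>i. 1) [0..<m]"
    unfolding diag_mat_def using A L by (auto simp: block_L_def m_def)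
  then have "det ?A = 1"
    using det_lower_triangular[OF upper_zero A] by (simp add: map_replicate_const)
  then have "?A \<in> Units (ring_mat TYPE(real) m ())"
    using det_non_zero_imp_unit[OF A] by simp
  then obtain Ai where Ai: "mat_inverse ?A = Some Ai"
    using mat_inverse(1)[OF A, of "()"] by (cases "mat_inverse ?A") auto
  from mat_inverse(2)[OF A Ai] have "?A * Ai = 1\<^sub>m m" "Ai * ?A = 1\<^sub>m m" "Ai \<in> carrier_mat m m"
    by auto
  moreover have "iter_mat n Bs = Ai * block_U n Bs"
    unfolding iter_mat_def using Ai by (simp add: m_def)
  ultimately show ?thesis using that by blast
qed

lemma nonzero_eigenvalue_iter_mat_iff:
  fixes Bs :: "real mat list"
  assumes Bs: "set Bs \<subseteq> carrier_mat n n" and "k \<noteq> 0"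
  defines "Cs \<equiv> map (map_mat complex_of_real) Bs" and "m \<equiv> length Bs * n"
  shows "k \<in> nonzero_eigenvalues (iter_mat n Bs) \<longleftrightarrow>
    (\<exists>v \<in> carrier_vec m. v \<noteq> 0\<^sub>v m \<and>
       block_mat (\<le>) n Cs *\<^sub>v v = k \<cdot>\<^sub>v ((1\<^sub>m m - block_mat (\<lambda>i j. j < i) n Cs) *\<^sub>v v))"
proof -
  let ?c = "map_mat complex_of_real" and ?A = "1\<^sub>m m - block_L n Bs"
  obtain Ai where Ai: "Ai \<in> carrier_mat m m" and left_inv: "Ai * ?A = 1\<^sub>m m"
    and right_inv: "?A * Ai = 1\<^sub>m m" and T: "iter_mat n Bs = Ai * block_U n Bs"
    using iter_mat_inverse unfolding m_def by blast
  have U: "block_U n Bs \<in> carrier_mat m m" and A: "?A \<in> carrier_mat m m"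
    by (simp_all add: block_U_eq_block_mat block_L_eq_block_mat m_def minus_carrier_mat)
  have "?c ?A = 1\<^sub>m m - ?c (block_L n Bs)"
    by (rule eq_matI) (simp_all add: block_L_def m_def)
  then have cA: "?c ?A = 1\<^sub>m m - block_mat (\<lambda>i j. j < i) n Cs"
    using map_mat_block_mat[OF Bs, of complex_of_real "\<lambda>i j. j < i"]
    by (simp add: block_L_eq_block_mat Cs_def)
  have cU: "?c (block_U n Bs) = block_mat (\<le>) n Cs"
    using map_mat_block_mat[OF Bs, of complex_of_real "(\<le>)"] by (simp add: block_U_eq_block_mat Cs_def)
  have "?c (iter_mat n Bs) = ?c Ai * ?c (block_U n Bs)"
    using T of_real_hom.mat_hom_mult[OF Ai U] by simp
  moreover have "?c Ai * ?c ?A = 1\<^sub>m m"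
    by (metis left_inv of_real_hom.mat_hom_mult[OF Ai A] of_real_hom.mat_hom_one)
  moreover have "?c ?A * ?c Ai = 1\<^sub>m m"
    by (metis right_inv of_real_hom.mat_hom_mult[OF A Ai] of_real_hom.mat_hom_one)
  ultimately have "eigenvalue (?c (iter_mat n Bs)) k \<longleftrightarrow>
      (\<exists>v \<in> carrier_vec m. v \<noteq> 0\<^sub>v m \<and> ?c (block_U n Bs) *\<^sub>v v = k \<cdot>\<^sub>v (?c ?A *\<^sub>v v))"
    using eigenvalue_inverse_mult_iff[of "?c ?A" m "?c Ai" "?c (block_U n Bs)" k] Ai U A by simp
  then show ?thesis using \<open>k \<noteq> 0\<close> cA cU by (simp add: nonzero_eigenvalues_def)
qed

lemma splitting_carrier:
  assumes "is_splitting n B Bs"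
  shows "Bs \<noteq> []" and "set Bs \<subseteq> carrier_mat n n" and "B \<in> carrier_mat n n"
    and "B = mat n n (\<lambda>ij. \<Sum>p<length Bs. Bs ! p $$ ij)"
  using assms unfolding is_splitting_def by (auto simp: in_set_conv_nth)

lemma splitting_two_eq_add: "is_splitting n B [B1, B2] \<Longrightarrow> B = B1 + B2"
  using splitting_carrier[of n B "[B1, B2]"] by (auto simp: numeral_2_eq_2)

lemma splitting_of_real:
  assumes "is_splitting n B Bs"
  shows "map_mat complex_of_real B
    = mat n n (\<lambda>ij. \<Sum>p<length Bs. map (map_mat complex_of_real) Bs ! p $$ ij)"
proof (rule eq_matI)
  note split = splitting_carrier[OF assms]
  fix i j assume "i < dim_row (mat n n (\<lambda>ij. \<Sum>p<length Bs. map (map_mat complex_of_real) Bs ! p $$ ij))"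
    and "j < dim_col (mat n n (\<lambda>ij. \<Sum>p<length Bs. map (map_mat complex_of_real) Bs ! p $$ ij))"
  then have "i < n" "j < n" by simp_all
  have "complex_of_real (Bs ! p $$ (i, j)) = map (map_mat complex_of_real) Bs ! p $$ (i, j)"
    if "p < length Bs" for p
  proof -
    have "Bs ! p \<in> carrier_mat n n" using split(2) that by auto
    then show ?thesis using that \<open>i < n\<close> \<open>j < n\<close> by simp
  qed
  with split(4) \<open>i < n\<close> \<open>j < n\<close> show "map_mat complex_of_real B $$ (i, j)
      = mat n n (\<lambda>ij. \<Sum>p<length Bs. map (map_mat complex_of_real) Bs ! p $$ ij) $$ (i, j)"
    by simp
qed (use splitting_carrier(3)[OF assms] in auto)

lemma nonzero_eigenvalue_iter_mat_iff_prod: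
  assumes split: "is_splitting n B Bs" and "k \<noteq> 0"
  defines "Cs \<equiv> map (map_mat complex_of_real) Bs"
  shows "k \<in> nonzero_eigenvalues (iter_mat n Bs) \<longleftrightarrow>
    (if k = 1 then eigenvalue (map_mat complex_of_real B) 1
     else eigenvalue (prod_one_plus_smult n ((k - 1) / k) Cs) k)"
proof -
  define P where "P = (\<lambda>i. prod_one_plus_smult n ((k - 1) / k) (take i Cs))"
  note Bs = splitting_carrier[OF split]
  have Cs: "set Cs \<subseteq> carrier_mat n n" "Cs \<noteq> []" "length Cs = length Bs"
    using Bs by (auto simp: Cs_def)
  have "k \<in> nonzero_eigenvalues (iter_mat n Bs) \<longleftrightarrow>
      (\<exists>v \<in> carrier_vec (length Cs * n). v \<noteq> 0\<^sub>v (length Cs * n) \<and>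
        (\<forall>i < length Cs. k \<cdot>\<^sub>v block_vec n v i = block_comb n Cs (\<lambda>j. if j < i then k else 1) (block_vec n v)))"
    using nonzero_eigenvalue_iter_mat_iff[OF Bs(2) \<open>k \<noteq> 0\<close>] generalized_eigen_iff_block_system[OF Cs(1)]
    by (simp add: Cs_def)
  also have "\<dots> \<longleftrightarrow> (\<exists>x. (\<forall>i < length Cs. x i \<in> carrier_vec n) \<and> (\<exists>i < length Cs. x i \<noteq> 0\<^sub>v n)
            \<and> (\<forall>i < length Cs. k \<cdot>\<^sub>v x i = block_comb n Cs (\<lambda>j. if j < i then k else 1) x))"
    by (rule ex_nonzero_block_vec_iff) (metis block_comb_cong)
  also have "\<dots> \<longleftrightarrow> (\<exists>w \<in> carrier_vec n. w \<noteq> 0\<^sub>v n \<and> block_comb n Cs (\<lambda>_. 1) (\<lambda>j. P j *\<^sub>v w) = k \<cdot>\<^sub>v w)"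
    unfolding P_def by (rule block_system_iff_partial_products[OF Cs(1,2) \<open>k \<noteq> 0\<close>])
  finally have char: "k \<in> nonzero_eigenvalues (iter_mat n Bs) \<longleftrightarrow> \<dots>" .
  show ?thesis
  proof (cases "k = 1")
    case True
    have "P j = 1\<^sub>m n" for j
      using True Cs(1) set_take_subset[of j Cs] by (simp add: P_def prod_one_plus_smult_zero)
    moreover have "map_mat complex_of_real B = mat n n (\<lambda>ij. \<Sum>j<length Cs. Cs ! j $$ ij)"
      using splitting_of_real[OF split] by (simp add: Cs_def)
    ultimately show ?thesis
      using char True block_comb_const[OF Cs(1)] Bs(3) by (auto simp: eigenvalue_iff_carrier[of _ n])
  next
    case False
    have "prod_one_plus_smult n ((k - 1) / k) Cs \<in> carrier_mat n n" using Cs(1) by simp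
    then show ?thesis
      using char False partial_products_eigen_iff[OF Cs(1) _ \<open>k \<noteq> 0\<close> False]
      by (auto simp: eigenvalue_iff_carrier[of _ n] P_def)
  qed
qed

lemma prod_one_plus_smult_of_real_split_last:
  fixes Rs Ss :: "real mat list"
  assumes "length Rs = d" and "length Ss = d + 1" and "1 \<le> d" and Ss: "set Ss \<subseteq> carrier_mat n n"
    and "\<forall>p < d - 1. Ss ! p = Rs ! p"
    and "is_splitting n (Rs ! (d - 1)) [Ss ! (d - 1), Ss ! d]"
    and "Ss ! d * Ss ! (d - 1) = 0\<^sub>m n n"
  defines "c \<equiv> map_mat complex_of_real"
  shows "prod_one_plus_smult n \<mu> (map c Ss) = prod_one_plus_smult n \<mu> (map c Rs)"
proof (rule prod_one_plus_smult_split_last[where d = d])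
  have A: "Ss ! (d - 1) \<in> carrier_mat n n" and B: "Ss ! d \<in> carrier_mat n n"
    using assms(1-4) by auto
  show "map c Rs ! (d - 1) = map c Ss ! (d - 1) + map c Ss ! d"
    using splitting_two_eq_add[OF assms(6)] A B assms(1-3) by (auto simp: c_def)
  have "c (Ss ! d) * c (Ss ! (d - 1)) = c (0\<^sub>m n n)"
    unfolding c_def by (metis of_real_hom.mat_hom_mult[OF B A] assms(7))
  then show "map c Ss ! d * map c Ss ! (d - 1) = 0\<^sub>m n n"
    using assms(1-3) by (auto simp: c_def)
qed (use assms in \<open>auto simp: c_def\<close>)

theorem proposition2p3:
  fixes n d r s :: nat and BJ :: "real mat" and Bs Bs' :: "real mat list"
  assumes "is_splitting n BJ Bs" and "length Bs = d"
    and "is_splitting n BJ Bs'" and "length Bs' = d + 1"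
    and "r \<le> d - 1" and "s \<le> d"
    and "\<forall>p < d - 1. (cshift ^^ s) Bs' ! p = (cshift ^^ r) Bs ! p"
    and "is_splitting n ((cshift ^^ r) Bs ! (d - 1)) [(cshift ^^ s) Bs' ! (d - 1), (cshift ^^ s) Bs' ! d]"
    and "(cshift ^^ s) Bs' ! d * (cshift ^^ s) Bs' ! (d - 1) = 0\<^sub>m n n"
  shows "nonzero_eigenvalues (iter_mat n Bs) = nonzero_eigenvalues (iter_mat n Bs')"
proof -
  let ?Cs = "map (map_mat complex_of_real) Bs" and ?Cs' = "map (map_mat complex_of_real) Bs'"
  note B = splitting_carrier[OF assms(1)] and B' = splitting_carrier[OF assms(3)]
  have "1 \<le> d" using B(1) assms(2) by (cases Bs) auto
  have "prod_one_plus_smult n \<mu> (map (map_mat complex_of_real) ((cshift ^^ s) Bs'))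
      = prod_one_plus_smult n \<mu> (map (map_mat complex_of_real) ((cshift ^^ r) Bs))" for \<mu>
    by (rule prod_one_plus_smult_of_real_split_last[OF _ _ \<open>1 \<le> d\<close> _ assms(7-9)])
      (use assms(2,4) B(1,2) B'(1,2) cshift_pow_length_set in auto)
  then have prods: "prod_one_plus_smult n \<mu> ((cshift ^^ s) ?Cs') = prod_one_plus_smult n \<mu> ((cshift ^^ r) ?Cs)" for \<mu>
    using B(1) B'(1) by (simp add: cshift_pow_map)
  have "eigenvalue (prod_one_plus_smult n \<mu> ?Cs) k \<longleftrightarrow> eigenvalue (prod_one_plus_smult n \<mu> ?Cs') k"
    if "k \<noteq> 0" for \<mu> k
  proof -
    have "set ?Cs \<subseteq> carrier_mat n n" "?Cs \<noteq> []" "set ?Cs' \<subseteq> carrier_mat n n" "?Cs' \<noteq> []"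
      using B B' by auto
    then show ?thesis using eigenvalue_prod_cshift_pow_iff[OF _ _ that] prods by metis
  qed
  then have "k \<in> nonzero_eigenvalues (iter_mat n Bs) \<longleftrightarrow> k \<in> nonzero_eigenvalues (iter_mat n Bs')" for k
    using nonzero_eigenvalue_iter_mat_iff_prod[OF assms(1), of k]
      nonzero_eigenvalue_iter_mat_iff_prod[OF assms(3), of k]
    by (cases "k = 0") (auto simp: nonzero_eigenvalues_def)
  then show ?thesis by blast
qed

end
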